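(* Under the standing assumptions below, let $\pi\in\Pi$ with $\mathbb A^*_\pi>0$, let $\delta>0$, and let $\tilde\pi$ be an optimal solution of the trust-region subproblem $$\max_{\pi'\in\Pi} L_{\pi}(\pi')\quad\text{s.t.}\quad \sum_{s}\rho_{\pi}(s)\,D_{TV}(\pi(\cdot|s)\,\|\,\pi'(\cdot|s))\le\delta.$$ Let $r=\dfrac{\eta(\tilde\pi)-\eta(\pi)}{L_\pi(\tilde\pi)-L_\pi(\pi)}$, $p_0=\min_s\rho_0(s)$ and $\bar A=\max_{s,a}|A_\pi(s,a)|$. Then $$r\ \ge\ \min\left(1-\frac{4\bar A\gamma\delta^2}{p_0^2(1-\gamma)^2\,\mathbb A^*_\pi},\ 1-\frac{4\bar A\gamma\delta}{p_0^2(1-\gamma)^3\,\mathbb A^*_\pi}\right).$$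
   Context: Consider an infinite-horizon discounted Markov decision process $(\mathcal S,\mathcal A,P,r,\rho_0,\gamma)$ with finite state space $\mathcal S$, finite action space $\mathcal A$, transition probabilities $P(s'|s,a)$, bounded reward function $r:\mathcal S\times\mathcal A\to\mathbb R$, initial-state distribution $\rho_0$ with $\rho_0(s)>0$ for all $s\in\mathcal S$, and discount factor $\gamma\in(0,1)$. A policy $\pi$ assigns to each state $s$ a probability distribution $\pi(\cdot|s)$ on $\mathcal A$; $\Pi$ denotes the set of all policies. The total expected reward is $\eta(\pi)=\mathbb E_\pi[\sum_{t=0}^\infty\gamma^t r(s_t,a_t)]$, where $s_0\sim\rho_0$, $a_t\sim\pi(\cdot|s_t)$, $s_{t+1}\sim P(\cdot|s_t,a_t)$. The unnormalized discounted visitation frequency is $\rho_\pi(s)=\sum_{t=0}^\infty\gamma^t\mathbb P(s_t=s\mid\pi)$. $Q_\pi(s,a)=\mathbb E_\pi[\sum_{l\ge0}\gamma^l r(s_l,a_l)\mid s_0=s,a_0=a]$, $V_\pi(s)=\mathbb E_\pi[\sum_{l\ge0}\gamma^l r(s_l,a_l)\mid s_0=s]$, and the advantage is $A_\pi(s,a)=Q_\pi(s,a)-V_\pi(s)$. The surrogate function is $L_\pi(\tilde\pi)=\eta(\pi)+\sum_s\rho_\pi(s)\sum_a\tilde\pi(a|s)A_\pi(s,a)$. The policy advantage of $\pi'$ with respect to $\pi$ is $\mathbb A_\pi(\pi')=\sum_s\rho_\pi(s)\sum_a\pi'(a|s)A_\pi(s,a)$, and $\mathbb A^*_\pi=\max_{\pi'\in\Pi}\mathbb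 A_\pi(\pi')$. The total variation distance is $D_{TV}(p\|q)=\frac12\sum_x|p(x)-q(x)|$. *)

theory Defs
  imports "HOL-Analysis.Analysis"
begin

text \<open>Finite MDP. States of type 's (finite), actions of type 'a (finite).
  Transition kernel P s a s' = P(s'|s,a); policy p s a = p(a|s).\<close>

definition is_policy :: "('s::finite \<Rightarrow> 'a::finite \<Rightarrow> real) \<Rightarrow> bool" where
  "is_policy p \<longleftrightarrow> (\<forall>s a. 0 \<le> p s a) \<and> (\<forall>s. (\<Sum>a\<in>UNIV. p s a) = 1)"

fun state_dist :: "('s::finite \<Rightarrow> 'a::finite \<Rightarrow> 's \<Rightarrow> real) \<Rightarrow> ('s \<Rightarrow> 'a \<Rightarrow> real)
    \<Rightarrow> ('s \<Rightarrow> real) \<Rightarrow> nat \<Rightarrow> 's \<Rightarrow> real" where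
  "state_dist P p mu 0 = mu"
| "state_dist P p mu (Suc t) =
     (\<lambda>s'. \<Sum>s\<in>UNIV. \<Sum>a\<in>UNIV. state_dist P p mu t s * p s a * P s a s')"

definition exp_reward :: "('s::finite \<Rightarrow> 'a::finite \<Rightarrow> 's \<Rightarrow> real) \<Rightarrow> ('s \<Rightarrow> 'a \<Rightarrow> real)
    \<Rightarrow> ('s \<Rightarrow> 'a \<Rightarrow> real) \<Rightarrow> ('s \<Rightarrow> real) \<Rightarrow> nat \<Rightarrow> real" where
  "exp_reward P r p mu t = (\<Sum>s\<in>UNIV. state_dist P p mu t s * (\<Sum>a\<in>UNIV. p s a * r s a))"

definition eta :: "('s::finite \<Rightarrow> 'a::finite \<Rightarrow> 's \<Rightarrow> real) \<Rightarrow> ('s \<Rightarrow> 'a \<Rightarrow> real) \<Rightarrow> real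
    \<Rightarrow> ('s \<Rightarrow> 'a \<Rightarrow> real) \<Rightarrow> ('s \<Rightarrow> real) \<Rightarrow> real" where
  "eta P r \<gamma> p mu = (\<Sum>t. \<gamma> ^ t * exp_reward P r p mu t)"

definition visit :: "('s::finite \<Rightarrow> 'a::finite \<Rightarrow> 's \<Rightarrow> real) \<Rightarrow> real
    \<Rightarrow> ('s \<Rightarrow> 'a \<Rightarrow> real) \<Rightarrow> ('s \<Rightarrow> real) \<Rightarrow> 's \<Rightarrow> real" where
  "visit P \<gamma> p mu s = (\<Sum>t. \<gamma> ^ t * state_dist P p mu t s)"

definition Vfun :: "('s::finite \<Rightarrow> 'a::finite \<Rightarrow> 's \<Rightarrow> real) \<Rightarrow> ('s \<Rightarrow> 'a \<Rightarrow> real) \<Rightarrow> real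
    \<Rightarrow> ('s \<Rightarrow> 'a \<Rightarrow> real) \<Rightarrow> 's \<Rightarrow> real" where
  "Vfun P r \<gamma> p s = eta P r \<gamma> p (\<lambda>s'. if s' = s then 1 else 0)"

text \<open>Q(s,a): reward at time 0 is r(s,a); from time 1 on the state distribution
  starts from P(.|s,a).\<close>
definition Qfun :: "('s::finite \<Rightarrow> 'a::finite \<Rightarrow> 's \<Rightarrow> real) \<Rightarrow> ('s \<Rightarrow> 'a \<Rightarrow> real) \<Rightarrow> real
    \<Rightarrow> ('s \<Rightarrow> 'a \<Rightarrow> real) \<Rightarrow> 's \<Rightarrow> 'a \<Rightarrow> real" where
  "Qfun P r \<gamma> p s a = r s a + (\<Sum>l. \<gamma> ^ Suc l * exp_reward P r p (P s a) l)"

definition Adv :: "('s::finite \<Rightarrow> 'a::finite \<Rightarrow> 's \<Rightarrow> real) \<Rightarrow> ('s \<Rightarrow> 'a \<Rightarrow> real) \<Rightarrow> real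
    \<Rightarrow> ('s \<Rightarrow> 'a \<Rightarrow> real) \<Rightarrow> 's \<Rightarrow> 'a \<Rightarrow> real" where
  "Adv P r \<gamma> p s a = Qfun P r \<gamma> p s a - Vfun P r \<gamma> p s"

definition pol_adv :: "('s::finite \<Rightarrow> 'a::finite \<Rightarrow> 's \<Rightarrow> real) \<Rightarrow> ('s \<Rightarrow> 'a \<Rightarrow> real) \<Rightarrow> real
    \<Rightarrow> ('s \<Rightarrow> real) \<Rightarrow> ('s \<Rightarrow> 'a \<Rightarrow> real) \<Rightarrow> ('s \<Rightarrow> 'a \<Rightarrow> real) \<Rightarrow> real" where
  "pol_adv P r \<gamma> mu p q =
     (\<Sum>s\<in>UNIV. visit P \<gamma> p mu s * (\<Sum>a\<in>UNIV. q s a * Adv P r \<gamma> p s a))"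

definition surrogate :: "('s::finite \<Rightarrow> 'a::finite \<Rightarrow> 's \<Rightarrow> real) \<Rightarrow> ('s \<Rightarrow> 'a \<Rightarrow> real) \<Rightarrow> real
    \<Rightarrow> ('s \<Rightarrow> real) \<Rightarrow> ('s \<Rightarrow> 'a \<Rightarrow> real) \<Rightarrow> ('s \<Rightarrow> 'a \<Rightarrow> real) \<Rightarrow> real" where
  "surrogate P r \<gamma> mu p q =
     eta P r \<gamma> p mu + (\<Sum>s\<in>UNIV. visit P \<gamma> p mu s * (\<Sum>a\<in>UNIV. q s a * Adv P r \<gamma> p s a))"

definition max_adv :: "('s::finite \<Rightarrow> 'a::finite \<Rightarrow> 's \<Rightarrow> real) \<Rightarrow> ('s \<Rightarrow> 'a \<Rightarrow> real) \<Rightarrow> real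
    \<Rightarrow> ('s \<Rightarrow> real) \<Rightarrow> ('s \<Rightarrow> 'a \<Rightarrow> real) \<Rightarrow> real" where
  "max_adv P r \<gamma> mu p = Sup {pol_adv P r \<gamma> mu p q | q. is_policy q}"

definition dtv :: "('x::finite \<Rightarrow> real) \<Rightarrow> ('x \<Rightarrow> real) \<Rightarrow> real" where
  "dtv p q = (1/2) * (\<Sum>x\<in>UNIV. \<bar>p x - q x\<bar>)"

definition tv_div :: "('s::finite \<Rightarrow> 'a::finite \<Rightarrow> 's \<Rightarrow> real) \<Rightarrow> real
    \<Rightarrow> ('s \<Rightarrow> real) \<Rightarrow> ('s \<Rightarrow> 'a \<Rightarrow> real) \<Rightarrow> ('s \<Rightarrow> 'a \<Rightarrow> real) \<Rightarrow> real" where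
  "tv_div P \<gamma> mu p q = (\<Sum>s\<in>UNIV. visit P \<gamma> p mu s * dtv (p s) (q s))"

end

theory Submission imports Defs begin

text \<open>Put \<open>G(s) = \<Sum>\<^sub>a \<pi>'(a|s) A\<^sub>\<pi>(s,a)\<close>. By the performance-difference identity the
  numerator of the ratio is \<open>\<Sum>\<^sub>s \<rho>\<^sub>\<pi>\<^sub>'(s) G(s)\<close>, while the denominator is \<open>\<Sum>\<^sub>s \<rho>\<^sub>\<pi>(s) G(s)\<close>.
  As \<open>\<rho>\<^sub>\<pi> \<ge> \<rho>\<^sub>0 \<ge> p\<^sub>0\<close>, the constraint bounds every \<open>D\<^sub>T\<^sub>V(\<pi>(\<cdot>|s), \<pi>'(\<cdot>|s))\<close> by \<open>\<delta>/p\<^sub>0\<close>.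
  Since \<open>\<Sum>\<^sub>a \<pi>(a|s) A\<^sub>\<pi>(s,a) = 0\<close>, this gives \<open>|G(s)| \<le> 2M\<delta>/p\<^sub>0\<close> with
  \<open>M = max\<^sub>s\<^sub>,\<^sub>a |A\<^sub>\<pi>(s,a)|\<close>; and the state distributions of the two policies drift apart
  by at most \<open>2\<delta>/p\<^sub>0\<close> per step, so \<open>\<parallel>\<rho>\<^sub>\<pi>\<^sub>' - \<rho>\<^sub>\<pi>\<parallel>\<^sub>1 \<le> 2\<gamma>\<delta>/(p\<^sub>0(1-\<gamma>)\<^sup>2)\<close>.
  Numerator and denominator therefore differ by at most \<open>4M\<gamma>\<delta>\<^sup>2/(p\<^sub>0\<^sup>2(1-\<gamma>)\<^sup>2)\<close>.
  On the other hand, mixing \<open>\<pi>\<close> with a greedy policy at weight \<open>min 1 (\<delta>(1-\<gamma>))\<close> is feasible and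
  raises the surrogate by that weight times \<open>\<bbbA>\<^sup>*\<^sub>\<pi>\<close>, which by optimality bounds the denominator
  from below.\<close>

lemma sum_swap3:
  "(\<Sum>x\<in>A. \<Sum>y\<in>B. \<Sum>z\<in>C. f x y z) = (\<Sum>y\<in>B. \<Sum>z\<in>C. \<Sum>x\<in>A. f x y z)"
  by (subst sum.swap) (rule sum.cong[OF refl], rule sum.swap)

lemma sum_indicator_mult:
  fixes f :: "'x::finite \<Rightarrow> 'b::comm_semiring_1"
  shows "(\<Sum>x\<in>UNIV. (if x = y then 1 else 0) * f x) = f y"
  by (simp add: if_distrib[where f="\<lambda>c. c * _"] cong: if_cong)

lemma summable_power_mult_bounded:
  fixes f :: "nat \<Rightarrow> real"
  assumes "\<And>t. \<bar>f t\<bar> \<le> C" "0 \<le> x" "x < 1"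
  shows "summable (\<lambda>t. x ^ t * f t)"
proof (rule summable_comparison_test)
  show "\<exists>N. \<forall>n\<ge>N. norm (x ^ n * f n) \<le> x ^ n * C"
    using assms by (auto simp: abs_mult intro!: mult_left_mono)
  show "summable (\<lambda>n. x ^ n * C)" using assms by (intro summable_mult2) simp
qed

lemma sums_of_nat_mult_power:
  fixes x :: real
  assumes "0 \<le> x" "x < 1"
  shows "(\<lambda>n. real n * x ^ n) sums (x / (1 - x)^2)"
proof -
  have "(\<lambda>n. x * (real (Suc n) * x ^ n)) sums (x * (1 / (1 - x)^2))"
    by (rule sums_mult, rule geometric_deriv_sums) (use assms in simp)
  hence "(\<lambda>n. real (Suc n) * x ^ Suc n) sums (x / (1 - x)^2)"
    by (simp add: mult_ac)
  thus ?thesis using sums_Suc_iff[where f="\<lambda>n. real n * x ^ n"] by simp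
qed

lemma ratio_ge_one_minus:
  fixes X Y B c :: real
  assumes "0 < c" "c \<le> X" "\<bar>Y - X\<bar> \<le> B"
  shows "1 - B / c \<le> Y / X"
proof -
  have X: "0 < X" using assms(1,2) by linarith
  have "B / X \<le> B / c"
    using assms order.trans[OF abs_ge_zero assms(3)] by (intro divide_left_mono) auto
  moreover have "- B / X \<le> (Y - X) / X"
    using assms(3) X by (intro divide_right_mono) auto
  moreover have "Y / X = 1 + (Y - X) / X" using X by (simp add: field_simps)
  ultimately show ?thesis by (simp add: field_simps)
qed

text \<open>The step size \<open>min 1 (\<delta>(1 - \<gamma>))\<close> of the feasible mixture produces the two branches
  of the bound.\<close>
lemma trust_region_bound_arith:
  fixes A Abar \<gamma> \<delta> p0 :: real
  assumes "0 < A" "0 < \<delta>" "\<gamma> < 1" "0 < p0"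
  shows "min (1 - 4 * Abar * \<gamma> * \<delta>^2 / (p0^2 * (1 - \<gamma>)^2 * A))
             (1 - 4 * Abar * \<gamma> * \<delta> / (p0^2 * (1 - \<gamma>)^3 * A))
         \<le> 1 - (4 * Abar * \<gamma> * (\<delta> / p0)^2 / (1 - \<gamma>)^2) / (min 1 (\<delta> * (1 - \<gamma>)) * A)"
proof (cases "1 \<le> \<delta> * (1 - \<gamma>)")
  case True
  thus ?thesis using assms by (simp add: power_divide field_simps)
next
  case False
  hence "min 1 (\<delta> * (1 - \<gamma>)) = \<delta> * (1 - \<gamma>)" by simp
  moreover have "(4 * Abar * \<gamma> * (\<delta> / p0)^2 / c^2) / (\<delta> * c * A)
      = 4 * Abar * \<gamma> * \<delta> / (p0^2 * c^3 * A)" if "c \<noteq> 0" for c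
    using assms that by (simp add: power_divide field_simps power2_eq_square power3_eq_cube)
  ultimately show ?thesis using assms(3) by simp
qed

lemma abs_le_Max_abs:
  fixes f :: "'s::finite \<Rightarrow> 'a::finite \<Rightarrow> real"
  shows "\<bar>f s a\<bar> \<le> Max {\<bar>f s a\<bar> | s a. True}"
proof -
  have "{\<bar>f s a\<bar> | s a. True} = (\<lambda>(s, a). \<bar>f s a\<bar>) ` UNIV" by auto
  hence "finite {\<bar>f s a\<bar> | s a. True}" by simp
  thus ?thesis by (rule Max_ge) blast
qed

section \<open>Policies and total variation\<close>

lemma is_policy_nonneg: "is_policy p \<Longrightarrow> 0 \<le> p s a"
  unfolding is_policy_def by auto

lemma is_policy_sum: "is_policy p \<Longrightarrow> (\<Sum>a\<in>UNIV. p s a) = 1"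
  unfolding is_policy_def by auto

lemma is_policy_le_one:
  assumes "is_policy p"
  shows "p s a \<le> 1"
proof -
  have "p s a \<le> (\<Sum>a\<in>UNIV. p s a)"
    by (rule member_le_sum) (auto simp: is_policy_nonneg[OF assms])
  thus ?thesis using is_policy_sum[OF assms] by simp
qed

lemma is_policy_mix:
  assumes "is_policy p" "is_policy q" "0 \<le> \<alpha>" "\<alpha> \<le> 1"
  shows "is_policy (\<lambda>s a. (1 - \<alpha>) * p s a + \<alpha> * q s a)"
  using assms is_policy_nonneg[OF assms(1)] is_policy_nonneg[OF assms(2)]
  unfolding is_policy_def by (auto simp: sum.distrib sum_distrib_left[symmetric])

lemma dtv_nonneg: "0 \<le> dtv p q"
  unfolding dtv_def by (simp add: sum_nonneg)

lemma dtv_policies_le_one: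
  assumes "is_policy p" "is_policy q"
  shows "dtv (p s) (q s) \<le> 1"
proof -
  have "dtv (p s) (q s) \<le> (1/2) * (\<Sum>a\<in>UNIV. p s a + q s a)"
    unfolding dtv_def
    by (rule mult_left_mono, rule sum_mono)
      (use is_policy_nonneg[OF assms(1)] is_policy_nonneg[OF assms(2)] in \<open>auto simp: abs_le_iff\<close>)
  thus ?thesis by (simp add: sum.distrib is_policy_sum[OF assms(1)] is_policy_sum[OF assms(2)])
qed

lemma dtv_mix:
  assumes "0 \<le> \<alpha>"
  shows "dtv x (\<lambda>a. (1 - \<alpha>) * x a + \<alpha> * y a) = \<alpha> * dtv x y"
proof -
  have "\<bar>x a - ((1 - \<alpha>) * x a + \<alpha> * y a)\<bar> = \<alpha> * \<bar>x a - y a\<bar>" for a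
  proof -
    have "x a - ((1 - \<alpha>) * x a + \<alpha> * y a) = \<alpha> * (x a - y a)" by (simp add: algebra_simps)
    thus ?thesis using assms by (simp add: abs_mult)
  qed
  thus ?thesis unfolding dtv_def by (simp add: sum_distrib_left[symmetric])
qed

lemma abs_sum_diff_mult_le_dtv:
  fixes x y f :: "'x::finite \<Rightarrow> real"
  assumes "\<And>a. \<bar>f a\<bar> \<le> C"
  shows "\<bar>\<Sum>a\<in>UNIV. (y a - x a) * f a\<bar> \<le> 2 * C * dtv x y"
proof -
  have "\<bar>\<Sum>a\<in>UNIV. (y a - x a) * f a\<bar> \<le> (\<Sum>a\<in>UNIV. \<bar>x a - y a\<bar> * C)"
    by (rule order_trans[OF sum_abs], rule sum_mono)
      (simp add: abs_mult abs_minus_commute mult_left_mono assms)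
  also have "\<dots> = 2 * C * dtv x y"
    unfolding dtv_def by (simp add: sum_distrib_right[symmetric])
  finally show ?thesis .
qed

lemma ex_greedy_policy:
  fixes f :: "'s::finite \<Rightarrow> 'a::finite \<Rightarrow> real"
  obtains q where "is_policy q"
    and "\<And>p s. is_policy p \<Longrightarrow> (\<Sum>a\<in>UNIV. p s a * f s a) \<le> (\<Sum>a\<in>UNIV. q s a * f s a)"
proof -
  have "\<exists>a. \<forall>b. f s b \<le> f s a" for s
  proof -
    have "Max (range (f s)) \<in> range (f s)" by (rule Max_in) auto
    then obtain a where "f s a = Max (range (f s))" by (metis imageE)
    thus ?thesis by (intro exI[of _ a]) (simp add: Max_ge)
  qed
  then obtain am where am: "\<And>s b. f s b \<le> f s (am s)" by metis
  define q where "q s a = (if a = am s then 1 else (0::real))" for s a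
  have "is_policy q" unfolding is_policy_def q_def by simp
  moreover have "(\<Sum>a\<in>UNIV. p s a * f s a) \<le> (\<Sum>a\<in>UNIV. q s a * f s a)" if "is_policy p" for p s
  proof -
    have "(\<Sum>a\<in>UNIV. p s a * f s a) \<le> (\<Sum>a\<in>UNIV. p s a * f s (am s))"
      by (rule sum_mono, rule mult_left_mono[OF am is_policy_nonneg[OF that]])
    also have "\<dots> = f s (am s)" by (simp add: sum_distrib_right[symmetric] is_policy_sum[OF that])
    also have "\<dots> = (\<Sum>a\<in>UNIV. q s a * f s a)" unfolding q_def by (rule sum_indicator_mult[symmetric])
    finally show ?thesis .
  qed
  ultimately show ?thesis using that by blast
qed

section \<open>State distributions\<close>

locale mdp =
  fixes P :: "'s::finite \<Rightarrow> 'a::finite \<Rightarrow> 's \<Rightarrow> real"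
  assumes transition_nonneg: "\<And>s a s'. 0 \<le> P s a s'"
    and transition_sum: "\<And>s a. (\<Sum>s'\<in>UNIV. P s a s') = 1"
begin

lemma sum_transition:
  "(\<Sum>s'\<in>UNIV. \<Sum>s\<in>UNIV. \<Sum>a\<in>UNIV. f s a * P s a s') = (\<Sum>s\<in>UNIV. \<Sum>a\<in>UNIV. f s a)"
  by (subst sum_swap3) (simp add: sum_distrib_left[symmetric] transition_sum)

lemma state_dist_nonneg:
  assumes "is_policy p" "\<And>s. 0 \<le> mu s"
  shows "0 \<le> state_dist P p mu t s"
  by (induction t arbitrary: s)
    (auto intro!: sum_nonneg mult_nonneg_nonneg simp: assms is_policy_nonneg transition_nonneg)

lemma sum_state_dist:
  assumes pol: "is_policy p"
  shows "(\<Sum>s\<in>UNIV. state_dist P p mu t s) = (\<Sum>s\<in>UNIV. mu s)"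
proof (induction t)
  case (Suc t)
  let ?d = "state_dist P p mu t"
  have "(\<Sum>s'\<in>UNIV. state_dist P p mu (Suc t) s')
      = (\<Sum>s'\<in>UNIV. \<Sum>s\<in>UNIV. \<Sum>a\<in>UNIV. (?d s * p s a) * P s a s')" by simp
  also have "\<dots> = (\<Sum>s\<in>UNIV. ?d s)"
    by (simp add: sum_transition sum_distrib_left[symmetric] is_policy_sum[OF pol])
  finally show ?case using Suc by simp
qed simp

lemma sum_abs_state_dist_le:
  assumes pol: "is_policy p"
  shows "(\<Sum>s\<in>UNIV. \<bar>state_dist P p mu t s\<bar>) \<le> (\<Sum>s\<in>UNIV. \<bar>mu s\<bar>)"
proof (induction t)
  case (Suc t)
  let ?d = "state_dist P p mu t"
  have "(\<Sum>s'\<in>UNIV. \<bar>state_dist P p mu (Suc t) s'\<bar>)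
      \<le> (\<Sum>s'\<in>UNIV. \<Sum>s\<in>UNIV. \<Sum>a\<in>UNIV. (\<bar>?d s\<bar> * p s a) * P s a s')"
    unfolding state_dist.simps
    by (intro sum_mono order_trans[OF sum_abs])
      (simp add: abs_mult is_policy_nonneg[OF pol] transition_nonneg)
  also have "\<dots> = (\<Sum>s\<in>UNIV. \<bar>?d s\<bar>)"
    by (simp add: sum_transition sum_distrib_left[symmetric] is_policy_sum[OF pol])
  finally show ?case using Suc by linarith
qed simp

lemma abs_state_dist_le:
  assumes "is_policy p"
  shows "\<bar>state_dist P p mu t s\<bar> \<le> (\<Sum>s\<in>UNIV. \<bar>mu s\<bar>)"
  using member_le_sum[of s UNIV "\<lambda>s. \<bar>state_dist P p mu t s\<bar>"]
    sum_abs_state_dist_le[OF assms, of mu t] by simp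

lemma state_dist_linear:
  assumes "finite I"
  shows "state_dist P p (\<lambda>x. \<Sum>i\<in>I. c i * nu i x) t y = (\<Sum>i\<in>I. c i * state_dist P p (nu i) t y)"
proof (induction t arbitrary: y)
  case (Suc t)
  have "state_dist P p (\<lambda>x. \<Sum>i\<in>I. c i * nu i x) (Suc t) y
     = (\<Sum>s\<in>UNIV. \<Sum>a\<in>UNIV. \<Sum>i\<in>I. c i * (state_dist P p (nu i) t s * p s a * P s a y))"
    by (simp add: Suc sum_distrib_right mult.assoc)
  also have "\<dots> = (\<Sum>i\<in>I. \<Sum>s\<in>UNIV. \<Sum>a\<in>UNIV. c i * (state_dist P p (nu i) t s * p s a * P s a y))"
    by (rule sum_swap3[symmetric])
  also have "\<dots> = (\<Sum>i\<in>I. c i * state_dist P p (nu i) (Suc t) y)"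
    by (simp add: sum_distrib_left mult.assoc)
  finally show ?case .
qed simp

lemma state_dist_Suc':
  "state_dist P p mu (Suc t) = state_dist P p (state_dist P p mu (Suc 0)) t"
  by (induction t) auto

lemma abs_exp_reward_le:
  assumes pol: "is_policy p"
  shows "\<bar>exp_reward P r p mu t\<bar> \<le> (\<Sum>s\<in>UNIV. \<bar>mu s\<bar>) * (\<Sum>s\<in>UNIV. \<Sum>a\<in>UNIV. \<bar>r s a\<bar>)"
proof -
  let ?d = "state_dist P p mu t" and ?R = "\<Sum>s\<in>UNIV. \<Sum>a\<in>UNIV. \<bar>r s a\<bar>"
  have R: "\<bar>\<Sum>a\<in>UNIV. p s a * r s a\<bar> \<le> ?R" for s
  proof -
    have "\<bar>\<Sum>a\<in>UNIV. p s a * r s a\<bar> \<le> (\<Sum>a\<in>UNIV. \<bar>r s a\<bar>)"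
      by (rule order_trans[OF sum_abs], rule sum_mono)
        (use is_policy_nonneg[OF pol, of s] is_policy_le_one[OF pol, of s]
          in \<open>simp add: abs_mult mult_left_le_one_le\<close>)
    also have "\<dots> \<le> ?R"
      by (rule member_le_sum[where f="\<lambda>s. \<Sum>a\<in>UNIV. \<bar>r s a\<bar>"]) (auto intro: sum_nonneg)
    finally show ?thesis .
  qed
  have "\<bar>exp_reward P r p mu t\<bar> \<le> (\<Sum>s\<in>UNIV. \<bar>?d s\<bar>) * ?R"
    unfolding exp_reward_def sum_distrib_right
    by (rule order_trans[OF sum_abs], rule sum_mono) (simp add: abs_mult R mult_left_mono)
  also have "\<dots> \<le> (\<Sum>s\<in>UNIV. \<bar>mu s\<bar>) * ?R"
    by (rule mult_right_mono[OF sum_abs_state_dist_le[OF pol]]) (auto intro: sum_nonneg)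
  finally show ?thesis .
qed

lemma exp_reward_linear:
  assumes "finite I"
  shows "exp_reward P r p (\<lambda>x. \<Sum>i\<in>I. c i * nu i x) t = (\<Sum>i\<in>I. c i * exp_reward P r p (nu i) t)"
proof -
  let ?R = "\<lambda>s. \<Sum>a\<in>UNIV. p s a * r s a"
  have "exp_reward P r p (\<lambda>x. \<Sum>i\<in>I. c i * nu i x) t
      = (\<Sum>s\<in>UNIV. \<Sum>i\<in>I. c i * (state_dist P p (nu i) t s * ?R s))"
    unfolding exp_reward_def state_dist_linear[OF assms] by (simp add: sum_distrib_right mult.assoc)
  also have "\<dots> = (\<Sum>i\<in>I. \<Sum>s\<in>UNIV. c i * (state_dist P p (nu i) t s * ?R s))"
    by (rule sum.swap)
  finally show ?thesis unfolding exp_reward_def by (simp add: sum_distrib_left)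
qed

lemma sum_abs_state_dist_diff_Suc_le:
  assumes pol: "is_policy p" and polq: "is_policy q"
    and mu: "\<And>s. 0 \<le> mu s" "(\<Sum>s\<in>UNIV. mu s) = 1"
    and D: "\<And>s. dtv (p s) (q s) \<le> D"
  shows "(\<Sum>s\<in>UNIV. \<bar>state_dist P q mu (Suc t) s - state_dist P p mu (Suc t) s\<bar>)
         \<le> (\<Sum>s\<in>UNIV. \<bar>state_dist P q mu t s - state_dist P p mu t s\<bar>) + 2 * D"
proof -
  let ?dq = "state_dist P q mu t" and ?dp = "state_dist P p mu t"
  let ?Y = "\<lambda>s a. \<bar>?dq s - ?dp s\<bar> * p s a + ?dq s * \<bar>q s a - p s a\<bar>"
  have dq_nonneg: "0 \<le> ?dq s" for s by (rule state_dist_nonneg[OF polq mu(1)])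
  have split: "state_dist P q mu (Suc t) s' - state_dist P p mu (Suc t) s'
     = (\<Sum>s\<in>UNIV. \<Sum>a\<in>UNIV. ((?dq s - ?dp s) * p s a + ?dq s * (q s a - p s a)) * P s a s')" for s'
  proof -
    have "state_dist P q mu (Suc t) s' - state_dist P p mu (Suc t) s'
      = (\<Sum>s\<in>UNIV. \<Sum>a\<in>UNIV. ?dq s * q s a * P s a s' - ?dp s * p s a * P s a s')"
      by (simp add: sum_subtractf)
    also have "\<dots> = (\<Sum>s\<in>UNIV. \<Sum>a\<in>UNIV. ((?dq s - ?dp s) * p s a + ?dq s * (q s a - p s a)) * P s a s')"
      by (rule sum.cong[OF refl], rule sum.cong[OF refl]) (simp add: algebra_simps)
    finally show ?thesis .
  qed
  have term_le: "\<bar>((?dq s - ?dp s) * p s a + ?dq s * (q s a - p s a)) * P s a s'\<bar> \<le> ?Y s a * P s a s'"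
    for s a s'
  proof -
    have "\<bar>(?dq s - ?dp s) * p s a + ?dq s * (q s a - p s a)\<bar> \<le> ?Y s a"
      by (rule order_trans[OF abs_triangle_ineq])
        (simp add: abs_mult abs_of_nonneg[OF is_policy_nonneg[OF pol]] abs_of_nonneg[OF dq_nonneg])
    from mult_right_mono[OF this transition_nonneg]
    show ?thesis by (simp only: abs_mult[of _ "P _ _ _"] abs_of_nonneg[OF transition_nonneg])
  qed
  have "\<bar>state_dist P q mu (Suc t) s' - state_dist P p mu (Suc t) s'\<bar>
      \<le> (\<Sum>s\<in>UNIV. \<Sum>a\<in>UNIV. ?Y s a * P s a s')" for s'
    unfolding split
    by (rule order_trans[OF sum_abs], rule sum_mono, rule order_trans[OF sum_abs], rule sum_mono)
      (rule term_le)
  hence "(\<Sum>s'\<in>UNIV. \<bar>state_dist P q mu (Suc t) s' - state_dist P p mu (Suc t) s'\<bar>)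
      \<le> (\<Sum>s'\<in>UNIV. \<Sum>s\<in>UNIV. \<Sum>a\<in>UNIV. ?Y s a * P s a s')"
    by (rule sum_mono)
  also have "\<dots> = (\<Sum>s\<in>UNIV. \<Sum>a\<in>UNIV. ?Y s a)" by (rule sum_transition)
  also have "\<dots> = (\<Sum>s\<in>UNIV. \<bar>?dq s - ?dp s\<bar>) + (\<Sum>s\<in>UNIV. ?dq s * (2 * dtv (p s) (q s)))"
    by (simp add: sum.distrib sum_distrib_left[symmetric] is_policy_sum[OF pol] dtv_def abs_minus_commute)
  also have "\<dots> \<le> (\<Sum>s\<in>UNIV. \<bar>?dq s - ?dp s\<bar>) + (\<Sum>s\<in>UNIV. ?dq s * (2 * D))"
    by (intro add_left_mono sum_mono mult_left_mono) (auto simp: D dq_nonneg)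
  also have "\<dots> = (\<Sum>s\<in>UNIV. \<bar>?dq s - ?dp s\<bar>) + 2 * D"
    by (simp add: sum_distrib_right[symmetric] sum_state_dist[OF polq] mu(2))
  finally show ?thesis .
qed

lemma sum_abs_state_dist_diff_le:
  assumes "is_policy p" "is_policy q" "\<And>s. 0 \<le> mu s" "(\<Sum>s\<in>UNIV. mu s) = 1"
    and "\<And>s. dtv (p s) (q s) \<le> D"
  shows "(\<Sum>s\<in>UNIV. \<bar>state_dist P q mu t s - state_dist P p mu t s\<bar>) \<le> 2 * D * t"
proof (induction t)
  case (Suc t)
  have "2 * D * real (Suc t) = 2 * D * real t + 2 * D" by (simp add: algebra_simps)
  with Suc.IH sum_abs_state_dist_diff_Suc_le[OF assms, of t] show ?case by linarith
qed simp

end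

section \<open>Values, advantages and the performance difference\<close>

locale discounted_mdp = mdp P for P :: "'s::finite \<Rightarrow> 'a::finite \<Rightarrow> 's \<Rightarrow> real" +
  fixes \<gamma> :: real
  assumes discount_nonneg: "0 \<le> \<gamma>" and discount_less_one: "\<gamma> < 1"
begin

lemma summable_exp_reward:
  "is_policy p \<Longrightarrow> summable (\<lambda>t. \<gamma> ^ t * exp_reward P r p mu t)"
  by (rule summable_power_mult_bounded[OF abs_exp_reward_le discount_nonneg discount_less_one])

lemma summable_state_dist:
  "is_policy p \<Longrightarrow> summable (\<lambda>t. \<gamma> ^ t * state_dist P p mu t s)"
  by (rule summable_power_mult_bounded[OF abs_state_dist_le discount_nonneg discount_less_one])

lemma eta_linear:
  assumes I: "finite I" and pol: "is_policy p"
  shows "eta P r \<gamma> p (\<lambda>x. \<Sum>i\<in>I. c i * nu i x) = (\<Sum>i\<in>I. c i * eta P r \<gamma> p (nu i))"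
proof -
  have "eta P r \<gamma> p (\<lambda>x. \<Sum>i\<in>I. c i * nu i x)
      = (\<Sum>t. \<Sum>i\<in>I. c i * (\<gamma> ^ t * exp_reward P r p (nu i) t))"
    unfolding eta_def exp_reward_linear[OF I] by (simp add: sum_distrib_left mult.left_commute)
  also have "\<dots> = (\<Sum>i\<in>I. \<Sum>t. c i * (\<gamma> ^ t * exp_reward P r p (nu i) t))"
    by (rule suminf_sum) (intro summable_mult summable_exp_reward[OF pol])
  also have "\<dots> = (\<Sum>i\<in>I. c i * eta P r \<gamma> p (nu i))"
    unfolding eta_def by (simp add: suminf_mult summable_exp_reward[OF pol])
  finally show ?thesis .
qed

lemma eta_unfold:
  assumes pol: "is_policy p"
  shows "eta P r \<gamma> p mu = exp_reward P r p mu 0 + \<gamma> * eta P r \<gamma> p (state_dist P p mu (Suc 0))"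
proof -
  let ?f = "\<lambda>t. \<gamma> ^ t * exp_reward P r p mu t"
  have "(\<lambda>t. ?f (Suc t)) = (\<lambda>t. \<gamma> * (\<gamma> ^ t * exp_reward P r p (state_dist P p mu (Suc 0)) t))"
  proof
    fix t
    show "?f (Suc t) = \<gamma> * (\<gamma> ^ t * exp_reward P r p (state_dist P p mu (Suc 0)) t)"
      unfolding exp_reward_def state_dist_Suc'[of p mu t] by simp
  qed
  hence "(\<Sum>t. ?f (Suc t)) = (\<Sum>t. \<gamma> * (\<gamma> ^ t * exp_reward P r p (state_dist P p mu (Suc 0)) t))"
    by simp
  also have "\<dots> = \<gamma> * eta P r \<gamma> p (state_dist P p mu (Suc 0))"
    unfolding eta_def by (rule suminf_mult, rule summable_exp_reward[OF pol])
  finally show ?thesis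
    using suminf_split_head[OF summable_exp_reward[OF pol, of r mu]] unfolding eta_def by simp
qed

lemma eta_eq_sum_Vfun:
  assumes "is_policy p"
  shows "eta P r \<gamma> p mu = (\<Sum>s\<in>UNIV. mu s * Vfun P r \<gamma> p s)"
proof -
  have "mu = (\<lambda>x. \<Sum>s\<in>UNIV. mu s * (\<lambda>s'. if s' = s then 1 else 0) x)"
    by (auto simp: if_distrib cong: if_cong)
  hence "eta P r \<gamma> p mu = eta P r \<gamma> p (\<lambda>x. \<Sum>s\<in>UNIV. mu s * (\<lambda>s'. if s' = s then 1 else 0) x)"
    by simp
  thus ?thesis unfolding Vfun_def eta_linear[OF finite_class.finite_UNIV assms] .
qed

lemma Qfun_eq:
  assumes "is_policy p"
  shows "Qfun P r \<gamma> p s a = r s a + \<gamma> * (\<Sum>s'\<in>UNIV. P s a s' * Vfun P r \<gamma> p s')"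
proof -
  have "(\<Sum>l. \<gamma> ^ Suc l * exp_reward P r p (P s a) l) = \<gamma> * eta P r \<gamma> p (P s a)"
    unfolding eta_def by (simp add: mult.assoc suminf_mult summable_exp_reward[OF assms])
  thus ?thesis unfolding Qfun_def eta_eq_sum_Vfun[OF assms, where mu = "P s a"] by simp
qed

lemma Vfun_eq_sum_Qfun:
  assumes pol: "is_policy p"
  shows "Vfun P r \<gamma> p s = (\<Sum>a\<in>UNIV. p s a * Qfun P r \<gamma> p s a)"
proof -
  let ?V = "Vfun P r \<gamma> p" and ?\<delta> = "\<lambda>s'. if s' = s then 1 else (0::real)"
  have "state_dist P p ?\<delta> (Suc 0) = (\<lambda>s'. \<Sum>a\<in>UNIV. p s a * P s a s')"
  proof
    fix s'
    have "state_dist P p ?\<delta> (Suc 0) s' = (\<Sum>s''\<in>UNIV. ?\<delta> s'' * (\<Sum>a\<in>UNIV. p s'' a * P s'' a s'))"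
      by (simp only: state_dist.simps mult.assoc sum_distrib_left)
    thus "state_dist P p ?\<delta> (Suc 0) s' = (\<Sum>a\<in>UNIV. p s a * P s a s')"
      by (simp only: sum_indicator_mult)
  qed
  hence "eta P r \<gamma> p (state_dist P p ?\<delta> (Suc 0))
      = (\<Sum>s'\<in>UNIV. (\<Sum>a\<in>UNIV. p s a * P s a s') * ?V s')"
    by (simp only: eta_eq_sum_Vfun[OF pol])
  also have "\<dots> = (\<Sum>a\<in>UNIV. p s a * (\<Sum>s'\<in>UNIV. P s a s' * ?V s'))"
    by (simp add: sum_distrib_left sum_distrib_right mult.assoc, rule sum.swap)
  finally have next_value: "eta P r \<gamma> p (state_dist P p ?\<delta> (Suc 0)) = \<dots>" .
  have "?V s = eta P r \<gamma> p ?\<delta>" unfolding Vfun_def ..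
  also have "\<dots> = (\<Sum>a\<in>UNIV. p s a * r s a) + \<gamma> * (\<Sum>a\<in>UNIV. p s a * (\<Sum>s'\<in>UNIV. P s a s' * ?V s'))"
    by (subst eta_unfold[OF pol]) (simp only: next_value exp_reward_def state_dist.simps(1) sum_indicator_mult)
  also have "\<dots> = (\<Sum>a\<in>UNIV. p s a * Qfun P r \<gamma> p s a)"
    by (simp add: Qfun_eq[OF pol] distrib_left sum.distrib sum_distrib_left mult.left_commute)
  finally show ?thesis .
qed

lemma sum_policy_Adv:
  assumes "is_policy p"
  shows "(\<Sum>a\<in>UNIV. p s a * Adv P r \<gamma> p s a) = 0"
  by (simp add: Adv_def right_diff_distrib sum_subtractf Vfun_eq_sum_Qfun[OF assms, symmetric]
      sum_distrib_right[symmetric] is_policy_sum[OF assms])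

lemma sum_state_dist_Adv:
  assumes pol: "is_policy p" and polq: "is_policy q"
  shows "(\<Sum>s\<in>UNIV. state_dist P q mu t s * (\<Sum>a\<in>UNIV. q s a * Adv P r \<gamma> p s a))
       = exp_reward P r q mu t
         + \<gamma> * (\<Sum>s\<in>UNIV. state_dist P q mu (Suc t) s * Vfun P r \<gamma> p s)
         - (\<Sum>s\<in>UNIV. state_dist P q mu t s * Vfun P r \<gamma> p s)"
proof -
  let ?V = "Vfun P r \<gamma> p" and ?d = "state_dist P q mu t"
  have "(\<Sum>a\<in>UNIV. q s a * Adv P r \<gamma> p s a) = (\<Sum>a\<in>UNIV. q s a * r s a)
      + \<gamma> * (\<Sum>a\<in>UNIV. q s a * (\<Sum>s'\<in>UNIV. P s a s' * ?V s')) - ?V s" for s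
    by (simp add: Adv_def Qfun_eq[OF pol] right_diff_distrib distrib_left sum.distrib sum_subtractf
        sum_distrib_right[symmetric] is_policy_sum[OF polq] sum_distrib_left mult.left_commute)
  hence "(\<Sum>s\<in>UNIV. ?d s * (\<Sum>a\<in>UNIV. q s a * Adv P r \<gamma> p s a))
      = exp_reward P r q mu t
        + \<gamma> * (\<Sum>s\<in>UNIV. ?d s * (\<Sum>a\<in>UNIV. q s a * (\<Sum>s'\<in>UNIV. P s a s' * ?V s')))
        - (\<Sum>s\<in>UNIV. ?d s * ?V s)"
    by (simp add: exp_reward_def right_diff_distrib distrib_left sum.distrib sum_subtractf
        sum_distrib_left mult.left_commute)
  also have "(\<Sum>s\<in>UNIV. ?d s * (\<Sum>a\<in>UNIV. q s a * (\<Sum>s'\<in>UNIV. P s a s' * ?V s')))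
      = (\<Sum>s\<in>UNIV. \<Sum>a\<in>UNIV. \<Sum>s'\<in>UNIV. ?d s * q s a * P s a s' * ?V s')"
    by (simp add: sum_distrib_left mult.assoc)
  also have "\<dots> = (\<Sum>s'\<in>UNIV. \<Sum>s\<in>UNIV. \<Sum>a\<in>UNIV. ?d s * q s a * P s a s' * ?V s')"
    by (rule sum_swap3[symmetric])
  also have "\<dots> = (\<Sum>s'\<in>UNIV. state_dist P q mu (Suc t) s' * ?V s')"
    by (simp add: sum_distrib_right)
  finally show ?thesis .
qed

theorem performance_difference:
  assumes pol: "is_policy p" and polq: "is_policy q"
  shows "eta P r \<gamma> q mu - eta P r \<gamma> p mu
       = (\<Sum>s\<in>UNIV. visit P \<gamma> q mu s * (\<Sum>a\<in>UNIV. q s a * Adv P r \<gamma> p s a))"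
proof -
  let ?G = "\<lambda>s. \<Sum>a\<in>UNIV. q s a * Adv P r \<gamma> p s a"
  let ?h = "\<lambda>t. \<gamma> ^ t * (\<Sum>s\<in>UNIV. state_dist P q mu t s * Vfun P r \<gamma> p s)"
  have "\<bar>\<Sum>s\<in>UNIV. state_dist P q mu t s * Vfun P r \<gamma> p s\<bar>
      \<le> (\<Sum>s\<in>UNIV. (\<Sum>s\<in>UNIV. \<bar>mu s\<bar>) * \<bar>Vfun P r \<gamma> p s\<bar>)" for t
    by (rule order_trans[OF sum_abs], rule sum_mono)
      (simp add: abs_mult mult_right_mono abs_state_dist_le[OF polq])
  \<comment> \<open>\<open>?h t\<close> is the discounted mean of \<open>V\<^sub>p\<close> at time \<open>t\<close> under \<open>q\<close>; it telescopes away.\<close>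
  hence "?h \<longlonglongrightarrow> 0"
    by (intro summable_LIMSEQ_zero summable_power_mult_bounded discount_nonneg discount_less_one)
  hence "(\<lambda>t. ?h (Suc t) - ?h t) sums (0 - ?h 0)" by (rule telescope_sums)
  hence "(\<lambda>t. \<gamma> ^ t * exp_reward P r q mu t + (?h (Suc t) - ?h t)) sums (eta P r \<gamma> q mu + (0 - ?h 0))"
    unfolding eta_def by (rule sums_add[OF summable_sums[OF summable_exp_reward[OF polq]]])
  moreover have "\<gamma> ^ t * exp_reward P r q mu t + (?h (Suc t) - ?h t)
      = (\<Sum>s\<in>UNIV. \<gamma> ^ t * state_dist P q mu t s * ?G s)" for t
  proof -
    have "\<gamma> ^ t * exp_reward P r q mu t + (?h (Suc t) - ?h t)
        = \<gamma> ^ t * (\<Sum>s\<in>UNIV. state_dist P q mu t s * ?G s)"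
      by (simp only: sum_state_dist_Adv[OF pol polq]) (simp add: algebra_simps)
    thus ?thesis by (simp only: sum_distrib_left mult.assoc)
  qed
  ultimately have "(\<lambda>t. \<Sum>s\<in>UNIV. \<gamma> ^ t * state_dist P q mu t s * ?G s)
      sums (eta P r \<gamma> q mu + (0 - ?h 0))"
    by simp
  moreover have "(\<lambda>t. \<Sum>s\<in>UNIV. \<gamma> ^ t * state_dist P q mu t s * ?G s)
      sums (\<Sum>s\<in>UNIV. visit P \<gamma> q mu s * ?G s)"
    unfolding visit_def
    by (intro sums_sum sums_mult2 summable_sums summable_state_dist[OF polq])
  moreover have "?h 0 = eta P r \<gamma> p mu" by (simp only: power_0 mult_1 state_dist.simps eta_eq_sum_Vfun[OF pol])
  ultimately show ?thesis using sums_unique2 by fastforce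
qed

lemma visit_nonneg:
  assumes "is_policy p" "\<And>s. 0 \<le> mu s"
  shows "0 \<le> visit P \<gamma> p mu s"
  unfolding visit_def
  by (rule suminf_nonneg[OF summable_state_dist[OF assms(1)]])
    (rule mult_nonneg_nonneg[OF zero_le_power[OF discount_nonneg] state_dist_nonneg[OF assms]])

lemma visit_ge_initial:
  assumes "is_policy p" "\<And>s. 0 \<le> mu s"
  shows "mu s \<le> visit P \<gamma> p mu s"
proof -
  have "(\<Sum>t\<in>{0}. \<gamma> ^ t * state_dist P p mu t s) \<le> visit P \<gamma> p mu s"
    unfolding visit_def
    by (rule sum_le_suminf[OF summable_state_dist[OF assms(1)]])
      (auto simp: state_dist_nonneg[OF assms] discount_nonneg)
  thus ?thesis by simp
qed

lemma sum_visit: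
  assumes pol: "is_policy p" and mu: "(\<Sum>s\<in>UNIV. mu s) = 1"
  shows "(\<Sum>s\<in>UNIV. visit P \<gamma> p mu s) = 1 / (1 - \<gamma>)"
proof -
  have "(\<Sum>s\<in>UNIV. visit P \<gamma> p mu s) = (\<Sum>t. \<Sum>s\<in>UNIV. \<gamma> ^ t * state_dist P p mu t s)"
    unfolding visit_def by (rule suminf_sum[symmetric], rule summable_state_dist[OF pol])
  also have "\<dots> = (\<Sum>t. \<gamma> ^ t)"
    by (simp add: sum_distrib_left[symmetric] sum_state_dist[OF pol] mu)
  also have "\<dots> = 1 / (1 - \<gamma>)"
    using discount_nonneg discount_less_one by (simp add: suminf_geometric)
  finally show ?thesis .
qed

lemma sum_abs_visit_diff_le:
  assumes pol: "is_policy p" and polq: "is_policy q"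
    and mu: "\<And>s. 0 \<le> mu s" "(\<Sum>s\<in>UNIV. mu s) = 1"
    and D: "\<And>s. dtv (p s) (q s) \<le> D"
  shows "(\<Sum>s\<in>UNIV. \<bar>visit P \<gamma> q mu s - visit P \<gamma> p mu s\<bar>) \<le> 2 * D * \<gamma> / (1 - \<gamma>)^2"
proof -
  let ?e = "\<lambda>t s. \<bar>state_dist P q mu t s - state_dist P p mu t s\<bar>"
  have "\<bar>?e t s\<bar> \<le> 2" for t s
    using abs_state_dist_le[OF polq, of mu t s] abs_state_dist_le[OF pol, of mu t s] mu by simp
  hence summable_e: "summable (\<lambda>t. \<gamma> ^ t * ?e t s)" for s
    by (rule summable_power_mult_bounded[OF _ discount_nonneg discount_less_one])
  have "\<bar>visit P \<gamma> q mu s - visit P \<gamma> p mu s\<bar> \<le> (\<Sum>t. \<gamma> ^ t * ?e t s)" for s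
  proof -
    have "visit P \<gamma> q mu s - visit P \<gamma> p mu s
        = (\<Sum>t. \<gamma> ^ t * state_dist P q mu t s - \<gamma> ^ t * state_dist P p mu t s)"
      unfolding visit_def
      by (rule suminf_diff[OF summable_state_dist[OF polq] summable_state_dist[OF pol]])
    hence "\<bar>visit P \<gamma> q mu s - visit P \<gamma> p mu s\<bar>
        = \<bar>\<Sum>t. \<gamma> ^ t * (state_dist P q mu t s - state_dist P p mu t s)\<bar>"
      by (simp only: right_diff_distrib)
    also have "\<dots> \<le> (\<Sum>t. \<gamma> ^ t * ?e t s)"
      using summable_rabs[of "\<lambda>t. \<gamma> ^ t * (state_dist P q mu t s - state_dist P p mu t s)"]
        summable_e[of s] discount_nonneg by (simp add: abs_mult)
    finally show ?thesis .
  qed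
  hence "(\<Sum>s\<in>UNIV. \<bar>visit P \<gamma> q mu s - visit P \<gamma> p mu s\<bar>) \<le> (\<Sum>s\<in>UNIV. \<Sum>t. \<gamma> ^ t * ?e t s)"
    by (rule sum_mono)
  also have "\<dots> = (\<Sum>t. \<gamma> ^ t * (\<Sum>s\<in>UNIV. ?e t s))"
    by (simp add: suminf_sum[OF summable_e] sum_distrib_left)
  also have "\<dots> \<le> (\<Sum>t. 2 * D * (real t * \<gamma> ^ t))"
  proof (rule suminf_le)
    show "\<gamma> ^ t * (\<Sum>s\<in>UNIV. ?e t s) \<le> 2 * D * (real t * \<gamma> ^ t)" for t
      using mult_left_mono[OF sum_abs_state_dist_diff_le[OF pol polq mu D, of t] zero_le_power]
        discount_nonneg by (simp add: mult_ac)
    show "summable (\<lambda>t. \<gamma> ^ t * (\<Sum>s\<in>UNIV. ?e t s))"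
      unfolding sum_distrib_left by (rule summable_sum, rule summable_e)
    show "summable (\<lambda>t. 2 * D * (real t * \<gamma> ^ t))"
      by (intro summable_mult sums_summable[OF sums_of_nat_mult_power] discount_nonneg
          discount_less_one)
  qed
  also have "\<dots> = 2 * D * \<gamma> / (1 - \<gamma>)^2"
    using sums_unique[OF sums_mult[OF sums_of_nat_mult_power[OF discount_nonneg discount_less_one],
          of "2 * D"]] by simp
  finally show ?thesis .
qed

section \<open>The trust-region step\<close>

lemma dtv_le_tv_div:
  assumes pol: "is_policy p" and c: "0 < c" "\<And>s. c \<le> mu s"
  shows "dtv (p s) (q s) \<le> tv_div P \<gamma> mu p q / c"
proof -
  have mu: "0 \<le> mu s" for s using c order.trans[of 0 c] by fastforce
  have "c * dtv (p s) (q s) \<le> visit P \<gamma> p mu s * dtv (p s) (q s)"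
    by (intro mult_right_mono dtv_nonneg order.trans[OF c(2) visit_ge_initial[where mu=mu, OF pol mu]])
  also have "\<dots> \<le> tv_div P \<gamma> mu p q"
    unfolding tv_div_def
    by (rule member_le_sum[where f="\<lambda>s. visit P \<gamma> p mu s * dtv (p s) (q s)"])
      (auto intro: mult_nonneg_nonneg visit_nonneg[OF pol mu] dtv_nonneg)
  finally show ?thesis using c(1) by (simp add: pos_le_divide_eq mult.commute)
qed

lemma tv_div_le:
  assumes pol: "is_policy p" and mu: "\<And>s. 0 \<le> mu s" "(\<Sum>s\<in>UNIV. mu s) = 1"
    and D: "\<And>s. dtv (p s) (q s) \<le> D"
  shows "tv_div P \<gamma> mu p q \<le> D / (1 - \<gamma>)"
proof -
  have "tv_div P \<gamma> mu p q \<le> (\<Sum>s\<in>UNIV. visit P \<gamma> p mu s * D)"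
    unfolding tv_div_def by (intro sum_mono mult_left_mono D visit_nonneg[OF pol mu(1)])
  also have "\<dots> = D / (1 - \<gamma>)"
    by (simp add: sum_distrib_right[symmetric] sum_visit[OF pol mu(2)])
  finally show ?thesis .
qed

lemma surrogate_gain_eq:
  assumes "is_policy p"
  shows "surrogate P r \<gamma> mu p q - surrogate P r \<gamma> mu p p = pol_adv P r \<gamma> mu p q"
  unfolding surrogate_def pol_adv_def by (simp add: sum_policy_Adv[OF assms])

theorem eta_gain_surrogate_gain_gap:
  assumes pol: "is_policy p" and polq: "is_policy q"
    and mu: "\<And>s. 0 \<le> mu s" "(\<Sum>s\<in>UNIV. mu s) = 1"
    and D: "\<And>s. dtv (p s) (q s) \<le> D"
    and Abar: "\<And>s a. \<bar>Adv P r \<gamma> p s a\<bar> \<le> Abar"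
  shows "\<bar>(eta P r \<gamma> q mu - eta P r \<gamma> p mu)
          - (surrogate P r \<gamma> mu p q - surrogate P r \<gamma> mu p p)\<bar>
         \<le> 4 * Abar * \<gamma> * D^2 / (1 - \<gamma>)^2"
proof -
  let ?G = "\<lambda>s. \<Sum>a\<in>UNIV. q s a * Adv P r \<gamma> p s a"
  have Abar_nonneg: "0 \<le> Abar" using Abar[of undefined undefined] by linarith
  have G_le: "\<bar>?G s\<bar> \<le> 2 * Abar * D" for s
  proof -
    have "?G s = (\<Sum>a\<in>UNIV. (q s a - p s a) * Adv P r \<gamma> p s a)"
      using sum_policy_Adv[OF pol, where r=r and s=s] by (simp add: left_diff_distrib sum_subtractf)
    also have "\<bar>\<dots>\<bar> \<le> 2 * Abar * dtv (p s) (q s)"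
      by (rule abs_sum_diff_mult_le_dtv[where f="Adv P r \<gamma> p s", OF Abar])
    also have "\<dots> \<le> 2 * Abar * D" using mult_left_mono[OF D[of s], of "2 * Abar"] Abar_nonneg by simp
    finally show ?thesis .
  qed
  have "(eta P r \<gamma> q mu - eta P r \<gamma> p mu) - (surrogate P r \<gamma> mu p q - surrogate P r \<gamma> mu p p)
      = (\<Sum>s\<in>UNIV. (visit P \<gamma> q mu s - visit P \<gamma> p mu s) * ?G s)"
    by (simp add: performance_difference[OF pol polq] surrogate_gain_eq[OF pol] pol_adv_def
        left_diff_distrib sum_subtractf)
  hence "\<bar>(eta P r \<gamma> q mu - eta P r \<gamma> p mu) - (surrogate P r \<gamma> mu p q - surrogate P r \<gamma> mu p p)\<bar>
      = \<bar>\<Sum>s\<in>UNIV. (visit P \<gamma> q mu s - visit P \<gamma> p mu s) * ?G s\<bar>"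
    by (rule arg_cong)
  also have "\<dots> \<le> (\<Sum>s\<in>UNIV. \<bar>visit P \<gamma> q mu s - visit P \<gamma> p mu s\<bar>) * (2 * Abar * D)"
    unfolding sum_distrib_right
    by (rule order_trans[OF sum_abs], rule sum_mono)
      (simp only: abs_mult, rule mult_left_mono[OF G_le abs_ge_zero])
  also have "\<dots> \<le> (2 * D * \<gamma> / (1 - \<gamma>)^2) * (2 * Abar * D)"
    using Abar_nonneg order.trans[OF dtv_nonneg D]
    by (intro mult_right_mono sum_abs_visit_diff_le[OF pol polq mu D]) simp
  also have "\<dots> = 4 * Abar * \<gamma> * D^2 / (1 - \<gamma>)^2"
    by (simp add: power2_eq_square)
  finally show ?thesis .
qed

lemma ex_policy_max_adv_le:
  assumes "\<And>s. 0 \<le> mu s" "is_policy p"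
  obtains q where "is_policy q" "max_adv P r \<gamma> mu p \<le> pol_adv P r \<gamma> mu p q"
proof -
  obtain q where q: "is_policy q"
    and greedy: "\<And>q' s. is_policy q' \<Longrightarrow> (\<Sum>a\<in>UNIV. q' s a * Adv P r \<gamma> p s a)
                                          \<le> (\<Sum>a\<in>UNIV. q s a * Adv P r \<gamma> p s a)"
    by (rule ex_greedy_policy[where f="Adv P r \<gamma> p"]) blast
  have "pol_adv P r \<gamma> mu p q' \<le> pol_adv P r \<gamma> mu p q" if "is_policy q'" for q'
    unfolding pol_adv_def
    by (rule sum_mono, rule mult_left_mono[OF greedy[OF that] visit_nonneg[OF assms(2,1)]])
  hence "max_adv P r \<gamma> mu p \<le> pol_adv P r \<gamma> mu p q"
    unfolding max_adv_def by (intro cSup_least) (auto intro: q)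
  with q that show ?thesis by blast
qed

theorem surrogate_gain_ge:
  assumes pol: "is_policy p" and mu: "\<And>s. 0 \<le> mu s" "(\<Sum>s\<in>UNIV. mu s) = 1"
    and \<alpha>: "0 \<le> \<alpha>" "\<alpha> \<le> 1" "\<alpha> \<le> \<delta> * (1 - \<gamma>)"
    and opt: "\<forall>q. is_policy q \<and> tv_div P \<gamma> mu p q \<le> \<delta> \<longrightarrow>
                surrogate P r \<gamma> mu p q \<le> surrogate P r \<gamma> mu p pt"
  shows "\<alpha> * max_adv P r \<gamma> mu p \<le> surrogate P r \<gamma> mu p pt - surrogate P r \<gamma> mu p p"
proof -
  obtain q where q: "is_policy q" and max_le: "max_adv P r \<gamma> mu p \<le> pol_adv P r \<gamma> mu p q"
    using ex_policy_max_adv_le[OF mu(1) pol] .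
  define qm where "qm s a = (1 - \<alpha>) * p s a + \<alpha> * q s a" for s a
  have qm: "is_policy qm" unfolding qm_def by (rule is_policy_mix[OF pol q \<alpha>(1,2)])
  have "dtv (p s) (qm s) \<le> \<alpha>" for s
  proof -
    have "dtv (p s) (qm s) = \<alpha> * dtv (p s) (q s)" unfolding qm_def by (rule dtv_mix[OF \<alpha>(1)])
    thus ?thesis using mult_left_le[OF dtv_policies_le_one[OF pol q] \<alpha>(1)] by simp
  qed
  hence "tv_div P \<gamma> mu p qm \<le> \<alpha> / (1 - \<gamma>)" by (rule tv_div_le[OF pol mu])
  also have "\<dots> \<le> \<delta>" using \<alpha>(3) discount_less_one by (simp add: pos_divide_le_eq)
  finally have qm_le_pt: "surrogate P r \<gamma> mu p qm \<le> surrogate P r \<gamma> mu p pt" using opt qm by blast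
  have qm_adv: "(\<Sum>a\<in>UNIV. qm s a * Adv P r \<gamma> p s a) = \<alpha> * (\<Sum>a\<in>UNIV. q s a * Adv P r \<gamma> p s a)"
    for s
    using sum_policy_Adv[OF pol, where r=r and s=s]
    by (simp add: qm_def distrib_right sum.distrib mult.assoc sum_distrib_left[symmetric])
  have "\<alpha> * max_adv P r \<gamma> mu p \<le> \<alpha> * pol_adv P r \<gamma> mu p q"
    by (rule mult_left_mono[OF max_le \<alpha>(1)])
  also have "\<dots> = pol_adv P r \<gamma> mu p qm"
    unfolding pol_adv_def qm_adv by (simp add: sum_distrib_left mult.left_commute)
  also have "\<dots> = surrogate P r \<gamma> mu p qm - surrogate P r \<gamma> mu p p"
    by (rule surrogate_gain_eq[OF pol, symmetric])
  also have "\<dots> \<le> surrogate P r \<gamma> mu p pt - surrogate P r \<gamma> mu p p"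
    using qm_le_pt by simp
  finally show ?thesis .
qed

theorem trust_region_ratio_ge:
  assumes pol: "is_policy p" and pt: "is_policy pt"
    and c: "0 < c" "\<And>s. c \<le> mu s" and mu_sum: "(\<Sum>s\<in>UNIV. mu s) = 1"
    and Abar: "\<And>s a. \<bar>Adv P r \<gamma> p s a\<bar> \<le> Abar"
    and Astar: "0 < max_adv P r \<gamma> mu p" and \<delta>: "0 < \<delta>"
    and feasible: "tv_div P \<gamma> mu p pt \<le> \<delta>"
    and opt: "\<forall>q. is_policy q \<and> tv_div P \<gamma> mu p q \<le> \<delta> \<longrightarrow>
                surrogate P r \<gamma> mu p q \<le> surrogate P r \<gamma> mu p pt"
  shows "min (1 - 4 * Abar * \<gamma> * \<delta>^2 / (c^2 * (1 - \<gamma>)^2 * max_adv P r \<gamma> mu p))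
             (1 - 4 * Abar * \<gamma> * \<delta> / (c^2 * (1 - \<gamma>)^3 * max_adv P r \<gamma> mu p))
         \<le> (eta P r \<gamma> pt mu - eta P r \<gamma> p mu) / (surrogate P r \<gamma> mu p pt - surrogate P r \<gamma> mu p p)"
proof -
  define \<alpha> where "\<alpha> = min 1 (\<delta> * (1 - \<gamma>))"
  define B where "B = 4 * Abar * \<gamma> * (\<delta> / c)^2 / (1 - \<gamma>)^2"
  have mu: "\<And>s. 0 \<le> mu s" "(\<Sum>s\<in>UNIV. mu s) = 1"
    using c order.trans[of 0 c] mu_sum by fastforce+
  have D: "dtv (p s) (pt s) \<le> \<delta> / c" for s
    using dtv_le_tv_div[where mu=mu and s=s and q=pt, OF pol c]
      divide_right_mono[OF feasible less_imp_le[OF c(1)]] by linarith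
  have "0 < \<alpha> * max_adv P r \<gamma> mu p"
    unfolding \<alpha>_def using \<delta> discount_less_one Astar by auto
  moreover have "\<alpha> * max_adv P r \<gamma> mu p \<le> surrogate P r \<gamma> mu p pt - surrogate P r \<gamma> mu p p"
    unfolding \<alpha>_def using \<delta> discount_less_one by (intro surrogate_gain_ge[OF pol mu _ _ _ opt]) auto
  moreover have "\<bar>(eta P r \<gamma> pt mu - eta P r \<gamma> p mu) - (surrogate P r \<gamma> mu p pt - surrogate P r \<gamma> mu p p)\<bar>
      \<le> B"
    unfolding B_def by (rule eta_gain_surrogate_gain_gap[OF pol pt mu D Abar])
  ultimately have "1 - B / (\<alpha> * max_adv P r \<gamma> mu p)
      \<le> (eta P r \<gamma> pt mu - eta P r \<gamma> p mu) / (surrogate P r \<gamma> mu p pt - surrogate P r \<gamma> mu p p)"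
    by (rule ratio_ge_one_minus)
  moreover have "min (1 - 4 * Abar * \<gamma> * \<delta>^2 / (c^2 * (1 - \<gamma>)^2 * max_adv P r \<gamma> mu p))
                     (1 - 4 * Abar * \<gamma> * \<delta> / (c^2 * (1 - \<gamma>)^3 * max_adv P r \<gamma> mu p))
      \<le> 1 - B / (\<alpha> * max_adv P r \<gamma> mu p)"
    unfolding \<alpha>_def B_def by (rule trust_region_bound_arith[OF Astar \<delta> discount_less_one c(1)])
  ultimately show ?thesis by linarith
qed

end

theorem mainTheorem3:
  fixes P :: "'s::finite \<Rightarrow> 'a::finite \<Rightarrow> 's \<Rightarrow> real"
    and r :: "'s \<Rightarrow> 'a \<Rightarrow> real"
    and \<rho>0 :: "'s \<Rightarrow> real"
    and \<gamma> \<delta> :: real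
    and p pt :: "'s \<Rightarrow> 'a \<Rightarrow> real"
  assumes P_nonneg: "\<forall>s a s'. 0 \<le> P s a s'"
    and P_sum: "\<forall>s a. (\<Sum>s'\<in>UNIV. P s a s') = 1"
    and rho0_pos: "\<forall>s. 0 < \<rho>0 s"
    and rho0_sum: "(\<Sum>s\<in>UNIV. \<rho>0 s) = 1"
    and gamma: "0 < \<gamma>" "\<gamma> < 1"
    and pol: "is_policy p"
    and Astar_pos: "max_adv P r \<gamma> \<rho>0 p > 0"
    and delta_pos: "\<delta> > 0"
    and pit_pol: "is_policy pt"
    and pit_feas: "tv_div P \<gamma> \<rho>0 p pt \<le> \<delta>"
    and pit_opt: "\<forall>q. is_policy q \<and> tv_div P \<gamma> \<rho>0 p q \<le> \<delta> \<longrightarrow>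
                     surrogate P r \<gamma> \<rho>0 p q \<le> surrogate P r \<gamma> \<rho>0 p pt"
  shows "let ratio = (eta P r \<gamma> pt \<rho>0 - eta P r \<gamma> p \<rho>0) /
                     (surrogate P r \<gamma> \<rho>0 p pt - surrogate P r \<gamma> \<rho>0 p p);
             p0 = Min (range \<rho>0);
             Abar = Max {\<bar>Adv P r \<gamma> p s a\<bar> | s a. True};
             Astar = max_adv P r \<gamma> \<rho>0 p
         in ratio \<ge> min (1 - 4 * Abar * \<gamma> * \<delta>^2 / (p0^2 * (1 - \<gamma>)^2 * Astar))
                         (1 - 4 * Abar * \<gamma> * \<delta> / (p0^2 * (1 - \<gamma>)^3 * Astar))"
proof -
  interpret discounted_mdp P \<gamma>
    using P_nonneg P_sum gamma by unfold_locales auto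
  have "0 < Min (range \<rho>0)" "\<And>s. Min (range \<rho>0) \<le> \<rho>0 s"
    using Min_in[of "range \<rho>0"] rho0_pos by auto
  from trust_region_ratio_ge[OF pol pit_pol this rho0_sum abs_le_Max_abs[where f="Adv P r \<gamma> p"]
      Astar_pos delta_pos pit_feas pit_opt]
  show ?thesis unfolding Let_def by simp
qed

end
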